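(* Let $L$ be the adjoint module of $gl(1|1)$; it is of type $\mathrm{III}_1$. For every $n\ge1$, \[ L^{\otimes n}\cong\mathrm{III}_1^{\otimes n}\cong\bigoplus_{\ell=-n+2}^{n}\binom{2n-2}{n-\ell}\,\mathrm{III}_\ell \] (parities of highest-weight vectors suppressed).
   Context: $gl(1|1)$ is the Lie superalgebra with basis $H,G$ (even), $Q_+,Q_-$ (odd), nonzero supercommutators $[G,Q_\pm]=\pm Q_\pm$, $[Q_+,Q_-]=H$ (so $Q_+Q_-+Q_-Q_+=H$ in the enveloping algebra). A weight is a $G$-eigenvalue. $\mathrm{III}_\gamma$ denotes the module with basis $v,Q_+v,Q_-v,Q_+Q_-v$ (all nonzero) of $G$-weights $\gamma-1,\gamma,\gamma-2,\gamma-1$, with $H$ acting by $0$ and $Q_-Q_+v=-Q_+Q_-v$ (with either parity of the highest-weight vector $Q_+v$). Tensor products of $\mathbb Z_2$-graded modules carry the usual super action. *)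

theory Defs
  imports Main Complex_Main "Jordan_Normal_Form.Matrix"
begin

text \<open>Basis of gl(1|1): H, G even; Qp = Q_+, Qm = Q_- odd.\<close>
datatype gen = H | G | Qp | Qm

fun odd_gen :: "gen \<Rightarrow> bool" where
  "odd_gen H = False" | "odd_gen G = False" | "odd_gen Qp = True" | "odd_gen Qm = True"

text \<open>A finite-dimensional Z2-graded module over gl(1|1), given in a homogeneous basis
  e_0,...,e_(d-1): smod_dim = d, smod_par i = True iff e_i is odd, and smod_act x is the
  d x d matrix of the action of the basis element x (column j = image of e_j).\<close>
record smod =
  smod_dim :: nat
  smod_par :: "nat \<Rightarrow> bool"
  smod_act :: "gen \<Rightarrow> complex mat"

text \<open>Coefficient of z in the supercommutator [x,y]:
  [G,Q_+] = Q_+, [G,Q_-] = -Q_-, [Q_+,Q_-] = [Q_-,Q_+] = H, and (super)antisymmetry.\<close>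
fun brk :: "gen \<Rightarrow> gen \<Rightarrow> gen \<Rightarrow> complex" where
  "brk G Qp z = (if z = Qp then 1 else 0)"
| "brk Qp G z = (if z = Qp then -1 else 0)"
| "brk G Qm z = (if z = Qm then -1 else 0)"
| "brk Qm G z = (if z = Qm then 1 else 0)"
| "brk Qp Qm z = (if z = H then 1 else 0)"
| "brk Qm Qp z = (if z = H then 1 else 0)"
| "brk _ _ z = 0"

fun gen_of :: "nat \<Rightarrow> gen" where
  "gen_of 0 = H" | "gen_of (Suc 0) = G" | "gen_of (Suc (Suc 0)) = Qp" | "gen_of _ = Qm"

text \<open>The adjoint module L: basis H, G, Q_+, Q_- (indices 0,1,2,3), x acts by ad x = [x,-].\<close>
definition adjoint_mod :: smod where
  "adjoint_mod = \<lparr> smod_dim = 4, smod_par = (\<lambda>i. odd_gen (gen_of i)),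
     smod_act = (\<lambda>x. mat 4 4 (\<lambda>(i,j). brk x (gen_of j) (gen_of i))) \<rparr>"

text \<open>The module III_\<gamma> with basis v, Q_+ v, Q_- v, Q_+Q_- v (indices 0,1,2,3),
  G-weights \<gamma>-1, \<gamma>, \<gamma>-2, \<gamma>-1, H acting by 0, Q_-Q_+ v = -Q_+Q_- v, and Q_\<pm>^2 = 0.
  The parameter p is the parity of v (so Q_+ v, the highest-weight vector, has parity \<not>p).\<close>
definition III :: "int \<Rightarrow> bool \<Rightarrow> smod" where
  "III \<gamma> p = \<lparr> smod_dim = 4,
     smod_par = (\<lambda>i. if i = 1 \<or> i = 2 then \<not> p else p),
     smod_act = (\<lambda>x. mat 4 4 (\<lambda>(i,j).
        (case x of
           H \<Rightarrow> 0
         | G \<Rightarrow> (if i = j then of_int \<gamma> - (if i = 0 \<or> i = 3 then 1 else if i = 1 then 0 else 2) else 0)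
         | Qp \<Rightarrow> (if (i,j) = (1,0) \<or> (i,j) = (3,2) then 1 else 0)
         | Qm \<Rightarrow> (if (i,j) = (2,0) then 1 else if (i,j) = (3,1) then -1 else 0)))) \<rparr>"

text \<open>Super tensor product: basis e_a \<otimes> f_b at index a * dim N + b, parity |a| + |b|,
  x(v \<otimes> w) = xv \<otimes> w + (-1)^(|x||v|) v \<otimes> xw.\<close>
definition stensor :: "smod \<Rightarrow> smod \<Rightarrow> smod" where
  "stensor M N = (let dM = smod_dim M; dN = smod_dim N in
    \<lparr> smod_dim = dM * dN,
      smod_par = (\<lambda>i. smod_par M (i div dN) \<noteq> smod_par N (i mod dN)),
      smod_act = (\<lambda>x. mat (dM * dN) (dM * dN) (\<lambda>(i,j).
         let a = i div dN; b = i mod dN; a' = j div dN; b' = j mod dN in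
         (if b = b' then smod_act M x $$ (a,a') else 0)
         + (if a = a' then (if odd_gen x \<and> smod_par M a' then -1 else 1) * smod_act N x $$ (b,b')
            else 0))) \<rparr>)"

definition triv_mod :: smod where
  "triv_mod = \<lparr> smod_dim = 1, smod_par = (\<lambda>_. False), smod_act = (\<lambda>_. 0\<^sub>m 1 1) \<rparr>"

fun stensor_pow :: "smod \<Rightarrow> nat \<Rightarrow> smod" where
  "stensor_pow M 0 = triv_mod"
| "stensor_pow M (Suc n) = stensor (stensor_pow M n) M"

definition dsum :: "smod \<Rightarrow> smod \<Rightarrow> smod" where
  "dsum M N = (let dM = smod_dim M; dN = smod_dim N in
    \<lparr> smod_dim = dM + dN,
      smod_par = (\<lambda>i. if i < dM then smod_par M i else smod_par N (i - dM)),
      smod_act = (\<lambda>x. mat (dM + dN) (dM + dN) (\<lambda>(i,j).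
         if i < dM \<and> j < dM then smod_act M x $$ (i,j)
         else if dM \<le> i \<and> dM \<le> j then smod_act N x $$ (i - dM, j - dM) else 0)) \<rparr>)"

definition zero_mod :: smod where
  "zero_mod = \<lparr> smod_dim = 0, smod_par = (\<lambda>_. False), smod_act = (\<lambda>_. 0\<^sub>m 0 0) \<rparr>"

definition dsum_list :: "smod list \<Rightarrow> smod" where
  "dsum_list Ms = foldr dsum Ms zero_mod"

definition smod_iso :: "smod \<Rightarrow> smod \<Rightarrow> bool" where
  "smod_iso M N \<longleftrightarrow> smod_dim M = smod_dim N \<and>
     (\<exists>T. T \<in> carrier_mat (smod_dim N) (smod_dim M) \<and> invertible_mat T \<and>
        (\<forall>i < smod_dim N. \<forall>j < smod_dim M. T $$ (i,j) \<noteq> 0 \<longrightarrow> smod_par N i = smod_par M j) \<and>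
        (\<forall>x. T * smod_act M x = smod_act N x * T))"

end

(*
  The adjoint module is isomorphic to III_1, with generating vector v = G. The heart of the
  proof is the decomposition
    III_\<gamma> \<otimes> III_1 \<cong> III_(\<gamma>+1) \<oplus> III_\<gamma> \<oplus> III_\<gamma> \<oplus> III_(\<gamma>-1),
  given by an explicit change of basis of the 16-dimensional tensor product and checked by
  evaluation on integer matrices; for G it suffices that this change of basis only relates basis
  vectors of equal weight. As the tensor product distributes over direct sums and respects
  isomorphisms, induction on n shows that III_1^(\<otimes>n) is a direct sum of modules III_\<ell> whose
  multiplicities satisfy m_(n+1)(\<ell>) = m_n(\<ell>-1) + 2 m_n(\<ell>) + m_n(\<ell>+1), the recursion of the
  binomial coefficients (2n-2 choose n-\<ell>).
*)

theory Submission
  imports Defs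
begin

section \<open>Isomorphisms as simultaneous similarity\<close>

definition smod_wf :: "smod \<Rightarrow> bool" where
  "smod_wf M \<longleftrightarrow> (\<forall>x. smod_act M x \<in> carrier_mat (smod_dim M) (smod_dim M))"

lemma smod_wf_carrier [simp]: "smod_wf M \<Longrightarrow> smod_act M x \<in> carrier_mat (smod_dim M) (smod_dim M)"
  by (simp add: smod_wf_def)

lemma smod_wf_dsum [simp]: "smod_wf (dsum M N)"
  by (simp add: smod_wf_def dsum_def Let_def)

lemma smod_wf_stensor [simp]: "smod_wf (stensor M N)"
  by (simp add: smod_wf_def stensor_def Let_def)

lemma smod_wf_zero_mod [simp]: "smod_wf zero_mod"
  by (simp add: smod_wf_def zero_mod_def)

lemma smod_wf_triv_mod [simp]: "smod_wf triv_mod"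
  by (simp add: smod_wf_def triv_mod_def)

lemma smod_wf_dsum_list [simp]: "smod_wf (dsum_list Ms)"
  by (cases Ms) (simp_all add: dsum_list_def)

lemma smod_wf_stensor_pow [simp]: "smod_wf (stensor_pow M n)"
  by (cases n) simp_all

lemma smod_wf_III [simp]: "smod_wf (III \<gamma> p)"
  by (simp add: smod_wf_def III_def)

lemma smod_wf_adjoint_mod [simp]: "smod_wf adjoint_mod"
  by (simp add: smod_wf_def adjoint_mod_def)

definition parity_sign :: "bool \<Rightarrow> complex" where
  "parity_sign b = (if b then -1 else 1)"

definition grading_mat :: "smod \<Rightarrow> complex mat" where
  "grading_mat M = mat_diag (smod_dim M) (\<lambda>i. parity_sign (smod_par M i))"

lemma grading_mat_carrier [simp]: "grading_mat M \<in> carrier_mat (smod_dim M) (smod_dim M)"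
  by (simp add: grading_mat_def)

lemma grading_mat_dim [simp]: "dim_row (grading_mat M) = smod_dim M" "dim_col (grading_mat M) = smod_dim M"
  using carrier_matD[OF grading_mat_carrier[of M]] by auto

lemma mat_diag_intertwine_iff:
  fixes T :: "'a :: idom mat"
  assumes T: "T \<in> carrier_mat n m"
  shows "T * mat_diag m \<alpha> = mat_diag n \<beta> * T \<longleftrightarrow> (\<forall>i<n. \<forall>j<m. T $$ (i,j) \<noteq> 0 \<longrightarrow> \<beta> i = \<alpha> j)"
proof -
  have "T * mat_diag m \<alpha> = mat_diag n \<beta> * T \<longleftrightarrow>
      (\<forall>i<n. \<forall>j<m. T $$ (i,j) * \<alpha> j = \<beta> i * T $$ (i,j))"
    using T by (auto simp: mat_diag_mult_left mat_diag_mult_right mat_eq_iff)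
  also have "\<dots> \<longleftrightarrow> (\<forall>i<n. \<forall>j<m. T $$ (i,j) \<noteq> 0 \<longrightarrow> \<beta> i = \<alpha> j)"
  proof -
    have "x * a = b * x \<longleftrightarrow> (x \<noteq> 0 \<longrightarrow> b = a)" for x a b :: 'a
      by (auto simp: mult.commute)
    then show ?thesis by simp
  qed
  finally show ?thesis .
qed

lemma mat_diag_cong: "(\<And>i. i < n \<Longrightarrow> f i = g i) \<Longrightarrow> mat_diag n f = mat_diag n g"
  by (rule eq_matI) (auto simp: mat_diag_def)

lemma parity_preserving_iff_grading_mat:
  assumes "T \<in> carrier_mat (smod_dim N) (smod_dim M)"
  shows "(\<forall>i<smod_dim N. \<forall>j<smod_dim M. T $$ (i,j) \<noteq> 0 \<longrightarrow> smod_par N i = smod_par M j)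
      \<longleftrightarrow> T * grading_mat M = grading_mat N * T"
  unfolding grading_mat_def mat_diag_intertwine_iff[OF assms] by (auto simp: parity_sign_def)

lemma invertible_matE:
  assumes "invertible_mat T" "T \<in> carrier_mat n n"
  obtains S where "S \<in> carrier_mat n n" "T * S = 1\<^sub>m n" "S * T = 1\<^sub>m n"
proof -
  from assms obtain S where TS: "T * S = 1\<^sub>m n" and ST: "S * T = 1\<^sub>m (dim_row S)"
    unfolding invertible_mat_def inverts_mat_def by auto
  have "dim_col S = n" using TS by (metis index_mult_mat(3) index_one_mat(3))
  moreover have "dim_row S = n" using ST assms(2) by (metis carrier_matD(2) index_mult_mat(3) index_one_mat(3))
  ultimately show ?thesis using that TS ST by auto
qed

lemma similar_mat_wit_iff_intertwines:
  assumes c: "{A, B, P, Q} \<subseteq> carrier_mat n n" and PQ: "P * Q = 1\<^sub>m n" and QP: "Q * P = 1\<^sub>m n"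
  shows "similar_mat_wit A B P Q \<longleftrightarrow> P * B = A * P"
proof
  assume "similar_mat_wit A B P Q"
  then have "A = P * B * Q" by (simp add: similar_mat_wit_def Let_def)
  have PB: "P * B \<in> carrier_mat n n" using c by auto
  have "A * P = P * B * (Q * P)"
    using \<open>A = P * B * Q\<close> assoc_mult_mat[OF PB, of Q n P n] c by simp
  then show "P * B = A * P" using QP right_mult_one_mat[OF PB] by simp
next
  assume "P * B = A * P"
  then have "P * B * Q = A * (P * Q)" using c assoc_mult_mat[of A n n P n Q n] by simp
  then show "similar_mat_wit A B P Q"
    using c PQ QP by (intro similar_mat_witI[of P Q n]) auto
qed

lemma smod_isoI:
  assumes "T \<in> carrier_mat n n" "S \<in> carrier_mat n n" "T * S = 1\<^sub>m n" "S * T = 1\<^sub>m n"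
    and "smod_dim M = n" "smod_dim N = n"
    and "T * grading_mat M = grading_mat N * T" "\<And>x. T * smod_act M x = smod_act N x * T"
  shows "smod_iso M N"
proof -
  have "invertible_mat T"
    using assms(1-4) unfolding invertible_mat_def inverts_mat_def square_mat.simps by auto
  then show ?thesis
    unfolding smod_iso_def using assms parity_preserving_iff_grading_mat[of T N M] by auto
qed

(* By parity_preserving_iff_grading_mat an isomorphism is a simultaneous similarity of the
   grading matrices and of all action matrices, so its properties reduce to those of similar_mat_wit. *)
definition smod_iso_wit :: "complex mat \<Rightarrow> complex mat \<Rightarrow> smod \<Rightarrow> smod \<Rightarrow> bool" where
  "smod_iso_wit P Q M N \<longleftrightarrow> similar_mat_wit (grading_mat N) (grading_mat M) P Q
     \<and> (\<forall>x. similar_mat_wit (smod_act N x) (smod_act M x) P Q)"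

lemma smod_iso_imp_wit:
  assumes iso: "smod_iso M N" and wf: "smod_wf M" "smod_wf N"
  shows "\<exists>P Q. smod_iso_wit P Q M N"
proof -
  obtain T where d: "smod_dim M = smod_dim N" and T: "T \<in> carrier_mat (smod_dim N) (smod_dim N)"
    and inv: "invertible_mat T"
    and par: "\<forall>i<smod_dim N. \<forall>j<smod_dim M. T $$ (i,j) \<noteq> 0 \<longrightarrow> smod_par N i = smod_par M j"
    and act: "\<forall>x. T * smod_act M x = smod_act N x * T"
    using iso unfolding smod_iso_def by auto
  obtain S where S: "S \<in> carrier_mat (smod_dim N) (smod_dim N)" and TS: "T * S = 1\<^sub>m (smod_dim N)"
    and ST: "S * T = 1\<^sub>m (smod_dim N)"
    using invertible_matE[OF inv T] by blast
  have c: "{grading_mat N, grading_mat M, smod_act N x, smod_act M x, T, S}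
      \<subseteq> carrier_mat (smod_dim N) (smod_dim N)" for x
    using wf T S grading_mat_carrier[of M] smod_wf_carrier[OF wf(1), of x] by (auto simp: d)
  have "T * grading_mat M = grading_mat N * T"
    using par parity_preserving_iff_grading_mat[of T N M] T d by simp
  then have "smod_iso_wit T S M N"
    unfolding smod_iso_wit_def using similar_mat_wit_iff_intertwines[OF _ TS ST] c act by simp
  then show ?thesis by blast
qed

lemma smod_iso_wit_imp_iso:
  assumes "smod_iso_wit P Q M N" and wf: "smod_wf M" "smod_wf N"
  shows "smod_iso M N"
proof -
  have g: "similar_mat_wit (grading_mat N) (grading_mat M) P Q"
    and a: "\<And>x. similar_mat_wit (smod_act N x) (smod_act M x) P Q"
    using assms(1) unfolding smod_iso_wit_def by blast+
  define n where "n = smod_dim N"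
  have gN: "grading_mat N \<in> carrier_mat n n" by (simp add: n_def)
  note gD = similar_mat_witD2[OF gN g]
  note PQ = gD(1,2) and cP = gD(6,7)
  have d: "smod_dim M = n" using gD(5) by auto
  have "P * grading_mat M = grading_mat N * P"
    using similar_mat_wit_iff_intertwines[OF _ PQ] g gN gD(5) cP by simp
  moreover have "P * smod_act M x = smod_act N x * P" for x
  proof -
    have "{smod_act N x, smod_act M x, P, Q} \<subseteq> carrier_mat n n"
      using smod_wf_carrier[OF wf(1), of x] smod_wf_carrier[OF wf(2), of x] cP d n_def by simp
    from iffD1[OF similar_mat_wit_iff_intertwines[OF this PQ] a] show ?thesis .
  qed
  ultimately show "smod_iso M N"
    using smod_isoI[OF cP PQ] d n_def by simp
qed

lemma smod_iso_refl: "smod_wf M \<Longrightarrow> smod_iso M M"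
  using smod_iso_wit_imp_iso[of "1\<^sub>m (smod_dim M)" "1\<^sub>m (smod_dim M)" M M]
    similar_mat_wit_refl[OF grading_mat_carrier] similar_mat_wit_refl[OF smod_wf_carrier]
  unfolding smod_iso_wit_def by blast

lemma smod_iso_sym:
  assumes "smod_iso M N" "smod_wf M" "smod_wf N"
  shows "smod_iso N M"
proof -
  obtain P Q where "smod_iso_wit P Q M N" using smod_iso_imp_wit assms by blast
  then have "smod_iso_wit Q P N M" unfolding smod_iso_wit_def by (blast intro: similar_mat_wit_sym)
  then show ?thesis using smod_iso_wit_imp_iso assms by blast
qed

(* In also/finally chains the well-formedness premises remain as side conditions; simp discharges
   them, since every module built from the constructors of Defs is well formed. *)
lemma smod_iso_trans [trans]:
  assumes "smod_iso M N" "smod_iso N K" "smod_wf M" "smod_wf N" "smod_wf K"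
  shows "smod_iso M K"
proof -
  obtain P Q P' Q' where "smod_iso_wit P Q M N" "smod_iso_wit P' Q' N K"
    using assms smod_iso_imp_wit by meson
  then have "smod_iso_wit (P' * P) (Q * Q') M K"
    unfolding smod_iso_wit_def by (blast intro: similar_mat_wit_trans)
  then show ?thesis using smod_iso_wit_imp_iso assms by blast
qed

lemma smod_isoI_eq:
  assumes "smod_wf M" "grading_mat N = grading_mat M" "\<And>x. smod_act N x = smod_act M x"
  shows "smod_iso M N"
proof -
  have "smod_dim N = smod_dim M"
    using arg_cong[OF assms(2), of dim_row] by simp
  then have "smod_wf N" using assms(1,3) by (simp add: smod_wf_def)
  moreover have "smod_iso_wit (1\<^sub>m (smod_dim M)) (1\<^sub>m (smod_dim M)) M N"
    unfolding smod_iso_wit_def assms(2,3) using assms(1) by (simp add: similar_mat_wit_refl)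
  ultimately show ?thesis using smod_iso_wit_imp_iso assms(1) by blast
qed

section \<open>Direct sums\<close>

lemma dsum_dim [simp]: "smod_dim (dsum A B) = smod_dim A + smod_dim B"
  by (simp add: dsum_def Let_def)

lemma dsum_act_four_block:
  assumes "smod_wf A" "smod_wf B"
  shows "smod_act (dsum A B) x = four_block_mat (smod_act A x) (0\<^sub>m (smod_dim A) (smod_dim B))
      (0\<^sub>m (smod_dim B) (smod_dim A)) (smod_act B x)"
  using smod_wf_carrier[OF assms(1), of x] smod_wf_carrier[OF assms(2), of x]
  by (intro eq_matI) (auto simp: dsum_def Let_def)

lemma grading_mat_dsum:
  "grading_mat (dsum A B) = four_block_mat (grading_mat A) (0\<^sub>m (smod_dim A) (smod_dim B))
      (0\<^sub>m (smod_dim B) (smod_dim A)) (grading_mat B)"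
  by (intro eq_matI) (auto simp: grading_mat_def mat_diag_def dsum_def Let_def)

lemma similar_mat_wit_block_diag:
  assumes "similar_mat_wit A B P Q" "similar_mat_wit A' B' P' Q'"
    and "A \<in> carrier_mat n n" "A' \<in> carrier_mat m m"
  shows "similar_mat_wit (four_block_mat A (0\<^sub>m n m) (0\<^sub>m m n) A') (four_block_mat B (0\<^sub>m n m) (0\<^sub>m m n) B')
      (four_block_mat P (0\<^sub>m n m) (0\<^sub>m m n) P') (four_block_mat Q (0\<^sub>m n m) (0\<^sub>m m n) Q')"
proof -
  have "P \<in> carrier_mat n n" "Q \<in> carrier_mat n n" "P' \<in> carrier_mat m m" "Q' \<in> carrier_mat m m"
    using similar_mat_witD2[OF assms(3,1)] similar_mat_witD2[OF assms(4,2)] by auto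
  then have "0\<^sub>m n m = P * 0\<^sub>m n m * Q'" "0\<^sub>m m n = P' * 0\<^sub>m m n * Q" by simp_all
  with similar_mat_wit_four_block[OF assms(1,2) _ _ assms(3,4),
      where UR = "0\<^sub>m n m" and LL = "0\<^sub>m m n" and URA = "0\<^sub>m n m" and LLA = "0\<^sub>m m n"]
  show ?thesis by simp
qed

lemma dsum_cong:
  assumes "smod_iso A A'" "smod_iso B B'"
    and wf: "smod_wf A" "smod_wf A'" "smod_wf B" "smod_wf B'"
  shows "smod_iso (dsum A B) (dsum A' B')"
proof -
  obtain P Q P' Q' where "smod_iso_wit P Q A A'" "smod_iso_wit P' Q' B B'"
    using assms smod_iso_imp_wit by meson
  then have g: "similar_mat_wit (grading_mat A') (grading_mat A) P Q"
      "similar_mat_wit (grading_mat B') (grading_mat B) P' Q'"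
    and a: "similar_mat_wit (smod_act A' x) (smod_act A x) P Q"
      "similar_mat_wit (smod_act B' x) (smod_act B x) P' Q'" for x
    unfolding smod_iso_wit_def by blast+
  have d: "smod_dim A' = smod_dim A" "smod_dim B' = smod_dim B"
    using assms(1,2) by (simp_all add: smod_iso_def)
  have "smod_iso_wit (four_block_mat P (0\<^sub>m (smod_dim A) (smod_dim B)) (0\<^sub>m (smod_dim B) (smod_dim A)) P')
      (four_block_mat Q (0\<^sub>m (smod_dim A) (smod_dim B)) (0\<^sub>m (smod_dim B) (smod_dim A)) Q')
      (dsum A B) (dsum A' B')"
    unfolding smod_iso_wit_def grading_mat_dsum dsum_act_four_block[OF wf(1,3)]
      dsum_act_four_block[OF wf(2,4)] d
    using similar_mat_wit_block_diag[OF g grading_mat_carrier[of A', unfolded d]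
        grading_mat_carrier[of B', unfolded d]]
      similar_mat_wit_block_diag[OF a smod_wf_carrier[OF wf(2), unfolded d]
        smod_wf_carrier[OF wf(4), unfolded d]]
    by blast
  then show ?thesis by (rule smod_iso_wit_imp_iso) simp_all
qed

lemma dsum_assoc: "dsum (dsum A B) C = dsum A (dsum B C)"
proof (rule smod.equality)
  show "smod_act (dsum (dsum A B) C) = smod_act (dsum A (dsum B C))"
    by (rule ext, rule eq_matI) (auto simp: dsum_def Let_def)
qed (auto simp: dsum_def Let_def)

lemma dsum_commute:
  assumes "smod_wf A" "smod_wf B"
  shows "smod_iso (dsum A B) (dsum B A)"
proof -
  define a b where "a = smod_dim A" and "b = smod_dim B"
  define swap :: "nat \<Rightarrow> nat \<Rightarrow> complex mat"
    where "swap m n = four_block_mat (0\<^sub>m n m) (1\<^sub>m n) (1\<^sub>m m) (0\<^sub>m m n)" for m n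
  have swap_block_diag: "swap m n * four_block_mat X (0\<^sub>m m n) (0\<^sub>m n m) Y
      = four_block_mat Y (0\<^sub>m n m) (0\<^sub>m m n) X * swap m n"
    if "X \<in> carrier_mat m m" "Y \<in> carrier_mat n n" for X Y m n
  proof -
    have "swap m n * four_block_mat X (0\<^sub>m m n) (0\<^sub>m n m) Y = four_block_mat (0\<^sub>m n m) Y X (0\<^sub>m m n)"
      unfolding swap_def
      by (subst mult_four_block_mat[where ?nr1.0=n and ?n1.0=m and ?n2.0=n and ?nr2.0=m and ?nc1.0=m and ?nc2.0=n])
        (use that in \<open>auto simp: right_mult_zero_mat[of _ m m] right_mult_zero_mat[of _ n n]\<close>)
    moreover have "four_block_mat Y (0\<^sub>m n m) (0\<^sub>m m n) X * swap m n = four_block_mat (0\<^sub>m n m) Y X (0\<^sub>m m n)"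
      unfolding swap_def
      by (subst mult_four_block_mat[where ?nr1.0=n and ?n1.0=n and ?n2.0=m and ?nr2.0=m and ?nc1.0=m and ?nc2.0=n])
        (use that in \<open>auto simp: right_mult_zero_mat[of _ m m] right_mult_zero_mat[of _ n n]\<close>)
    ultimately show ?thesis by simp
  qed
  have swap_inv: "swap m n * swap n m = 1\<^sub>m (n + m)" for m n
    unfolding swap_def
    by (subst mult_four_block_mat[where ?nr1.0=n and ?n1.0=m and ?n2.0=n and ?nr2.0=m and ?nc1.0=n and ?nc2.0=m])
      auto
  show ?thesis
  proof (rule smod_isoI[of "swap a b" "a + b" "swap b a"])
    show "swap a b \<in> carrier_mat (a + b) (a + b)" "swap b a \<in> carrier_mat (a + b) (a + b)"
      unfolding swap_def carrier_mat_def by auto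
    show "swap a b * swap b a = 1\<^sub>m (a + b)" "swap b a * swap a b = 1\<^sub>m (a + b)"
      using swap_inv[of a b] swap_inv[of b a] by (simp_all add: add.commute)
    show "smod_dim (dsum A B) = a + b" "smod_dim (dsum B A) = a + b"
      by (simp_all add: a_def b_def)
    show "swap a b * grading_mat (dsum A B) = grading_mat (dsum B A) * swap a b"
      unfolding grading_mat_dsum a_def b_def by (rule swap_block_diag) simp_all
    show "swap a b * smod_act (dsum A B) x = smod_act (dsum B A) x * swap a b" for x
      unfolding dsum_act_four_block[OF assms] dsum_act_four_block[OF assms(2,1)] a_def b_def
      by (rule swap_block_diag) (simp_all add: assms)
  qed
qed

lemma zero_mod_dim [simp]: "smod_dim zero_mod = 0"
  by (simp add: zero_mod_def)

lemma dsum_zero_mod_left: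
  assumes "smod_wf A"
  shows "smod_iso A (dsum zero_mod A)"
proof (rule smod_isoI_eq[OF assms])
  show "smod_act (dsum zero_mod A) x = smod_act A x" for x
    using smod_wf_carrier[OF assms, of x] by (auto simp: dsum_def zero_mod_def Let_def intro!: eq_matI)
qed (auto simp: grading_mat_def mat_diag_def dsum_def zero_mod_def Let_def intro!: eq_matI)

lemma dsum_zero_mod_right:
  assumes "smod_wf A"
  shows "smod_iso A (dsum A zero_mod)"
proof (rule smod_isoI_eq[OF assms])
  show "smod_act (dsum A zero_mod) x = smod_act A x" for x
    using smod_wf_carrier[OF assms, of x] by (auto simp: dsum_def zero_mod_def Let_def intro!: eq_matI)
qed (auto simp: grading_mat_def mat_diag_def dsum_def zero_mod_def Let_def intro!: eq_matI)

lemma dsum_list_Nil: "dsum_list [] = zero_mod"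
  and dsum_list_Cons: "dsum_list (M # Ms) = dsum M (dsum_list Ms)"
  by (simp_all add: dsum_list_def)

lemma dsum_list_append:
  assumes "\<forall>M\<in>set Ms. smod_wf M"
  shows "smod_iso (dsum (dsum_list Ms) (dsum_list Ns)) (dsum_list (Ms @ Ns))"
  using assms
proof (induction Ms)
  case Nil
  show ?case
    using smod_iso_sym[OF dsum_zero_mod_left] by (simp add: dsum_list_Nil)
next
  case (Cons M Ms)
  have "dsum (dsum_list (M # Ms)) (dsum_list Ns) = dsum M (dsum (dsum_list Ms) (dsum_list Ns))"
    by (simp add: dsum_list_Cons dsum_assoc)
  also have "smod_iso \<dots> (dsum M (dsum_list (Ms @ Ns)))"
    using Cons by (intro dsum_cong smod_iso_refl) simp_all
  finally show ?case by (simp add: dsum_list_Cons)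
qed

lemma dsum_list_perm:
  assumes "mset Ms = mset Ns" "\<forall>M\<in>set Ms. smod_wf M"
  shows "smod_iso (dsum_list Ms) (dsum_list Ns)"
  using assms
proof (induction Ms arbitrary: Ns)
  case Nil
  then show ?case by (simp add: smod_iso_refl)
next
  case (Cons M Ms)
  have "M \<in> set Ns" using Cons.prems(1) by (metis list.set_intros(1) set_mset_mset)
  then obtain Ns1 Ns2 where Ns: "Ns = Ns1 @ M # Ns2" by (meson split_list)
  have "set Ns = set (M # Ms)" using Cons.prems(1) by (metis mset_eq_setD)
  then have wf: "smod_wf M" "\<forall>K\<in>set Ms. smod_wf K" "\<forall>K\<in>set Ns1. smod_wf K"
    using Cons.prems(2) Ns by auto
  have IH: "smod_iso (dsum_list Ms) (dsum_list (Ns1 @ Ns2))"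
    using Cons.IH[OF _ wf(2)] Cons.prems(1) Ns by simp
  have "smod_iso (dsum_list (M # Ms)) (dsum M (dsum_list (Ns1 @ Ns2)))"
    unfolding dsum_list_Cons using dsum_cong[OF smod_iso_refl IH] wf(1) by simp
  also have "smod_iso \<dots> (dsum M (dsum (dsum_list Ns1) (dsum_list Ns2)))"
    using dsum_cong[OF smod_iso_refl smod_iso_sym[OF dsum_list_append[OF wf(3)]]] wf(1) by simp
  also have "\<dots> = dsum (dsum M (dsum_list Ns1)) (dsum_list Ns2)"
    by (simp add: dsum_assoc)
  also have "smod_iso \<dots> (dsum (dsum (dsum_list Ns1) M) (dsum_list Ns2))"
    using dsum_cong[OF dsum_commute smod_iso_refl] wf(1) by simp
  also have "\<dots> = dsum (dsum_list Ns1) (dsum_list (M # Ns2))"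
    by (simp add: dsum_assoc dsum_list_Cons)
  also have "smod_iso \<dots> (dsum_list Ns)"
    using dsum_list_append[OF wf(3)] Ns by simp
  finally show ?case by simp
qed

section \<open>Kronecker products and super tensor products\<close>

definition kron :: "'a :: times mat \<Rightarrow> 'a mat \<Rightarrow> 'a mat" where
  "kron A B = mat (dim_row A * dim_row B) (dim_col A * dim_col B)
     (\<lambda>(i,j). A $$ (i div dim_row B, j div dim_col B) * B $$ (i mod dim_row B, j mod dim_col B))"

lemma kron_carrier_mat [simp]:
    "A \<in> carrier_mat r c \<Longrightarrow> B \<in> carrier_mat r' c' \<Longrightarrow> kron A B \<in> carrier_mat (r * r') (c * c')"
  and kron_dim [simp]: "dim_row (kron A B) = dim_row A * dim_row B" "dim_col (kron A B) = dim_col A * dim_col B"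
  by (simp_all add: kron_def)

lemma kron_index:
  "i < dim_row A * dim_row B \<Longrightarrow> j < dim_col A * dim_col B \<Longrightarrow>
   kron A B $$ (i,j) = A $$ (i div dim_row B, j div dim_col B) * B $$ (i mod dim_row B, j mod dim_col B)"
  by (simp add: kron_def)

lemma index_mult_mat_sum:
  "A \<in> carrier_mat r k \<Longrightarrow> B \<in> carrier_mat k c \<Longrightarrow> i < r \<Longrightarrow> j < c \<Longrightarrow>
   (A * B) $$ (i,j) = (\<Sum>l<k. A $$ (i,l) * B $$ (l,j))"
  by (auto simp: scalar_prod_def atLeast0LessThan intro!: sum.cong)

lemma sum_lessThan_mult_nat: "(\<Sum>k<m * n. f k) = (\<Sum>u<m. \<Sum>v<n. f (u * n + v :: nat))"
proof -
  have "(\<Sum>k<m * n. f k) = (\<Sum>u<m. sum f {u * n..<u * n + n})" by (rule sum.nat_group[symmetric])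
  also have "\<dots> = (\<Sum>u<m. \<Sum>v<n. f (u * n + v))"
  proof (rule sum.cong[OF refl])
    fix u
    have "sum f {u * n..<u * n + n} = sum f ((\<lambda>v. u * n + v) ` {..<n})"
      by (simp add: lessThan_atLeast0 image_add_atLeastLessThan add.commute)
    also have "\<dots> = (\<Sum>v<n. f (u * n + v))" by (subst sum.reindex) (auto simp: inj_on_def)
    finally show "sum f {u * n..<u * n + n} = (\<Sum>v<n. f (u * n + v))" .
  qed
  finally show ?thesis .
qed

lemma kron_mult:
  fixes A B C D :: "'a :: comm_semiring_1 mat"
  assumes A: "A \<in> carrier_mat r1 k1" and B: "B \<in> carrier_mat r2 k2"
    and C: "C \<in> carrier_mat k1 c1" and D: "D \<in> carrier_mat k2 c2"
  shows "kron A B * kron C D = kron (A * C) (B * D)"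
proof (rule eq_matI)
  fix i j assume "i < dim_row (kron (A * C) (B * D))" "j < dim_col (kron (A * C) (B * D))"
  then have i: "i < r1 * r2" and j: "j < c1 * c2" using A B C D by auto
  then have r2: "r2 > 0" and c2: "c2 > 0" by (cases r2; cases c2; auto)+
  have ij: "i div r2 < r1" "i mod r2 < r2" "j div c2 < c1" "j mod c2 < c2"
    using i j r2 c2 by (auto simp: less_mult_imp_div_less)
  have KA: "kron A B \<in> carrier_mat (r1 * r2) (k1 * k2)" and KC: "kron C D \<in> carrier_mat (k1 * k2) (c1 * c2)"
    using A B C D by simp_all
  have "(kron A B * kron C D) $$ (i,j) = (\<Sum>k<k1 * k2. kron A B $$ (i,k) * kron C D $$ (k,j))"
    by (rule index_mult_mat_sum[OF KA KC i j])
  also have "\<dots> = (\<Sum>u<k1. \<Sum>v<k2. kron A B $$ (i, u * k2 + v) * kron C D $$ (u * k2 + v, j))"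
    by (rule sum_lessThan_mult_nat)
  also have "\<dots> = (\<Sum>u<k1. \<Sum>v<k2. (A $$ (i div r2, u) * C $$ (u, j div c2))
      * (B $$ (i mod r2, v) * D $$ (v, j mod c2)))"
  proof (intro sum.cong refl)
    fix u v assume u: "u \<in> {..<k1}" and v: "v \<in> {..<k2}"
    then have uv: "u * k2 + v < k1 * k2"
      by (metis lessThan_iff add.commute add_less_cancel_left less_le_trans mult_Suc mult_le_mono1 Suc_leI)
    show "kron A B $$ (i, u * k2 + v) * kron C D $$ (u * k2 + v, j)
      = (A $$ (i div r2, u) * C $$ (u, j div c2)) * (B $$ (i mod r2, v) * D $$ (v, j mod c2))"
      using A B C D i j uv v by (simp add: kron_index ac_simps)
  qed
  also have "\<dots> = (\<Sum>u<k1. A $$ (i div r2, u) * C $$ (u, j div c2))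
      * (\<Sum>v<k2. B $$ (i mod r2, v) * D $$ (v, j mod c2))"
    by (simp add: sum_product)
  also have "\<dots> = kron (A * C) (B * D) $$ (i,j)"
    using index_mult_mat_sum[OF A C ij(1,3)] index_mult_mat_sum[OF B D ij(2,4)] A B C D i j
    by (simp add: kron_index)
  finally show "(kron A B * kron C D) $$ (i,j) = kron (A * C) (B * D) $$ (i,j)" .
qed (use A B C D in auto)

lemma kron_one: "kron (1\<^sub>m m) (1\<^sub>m n) = (1\<^sub>m (m * n) :: 'a :: semiring_1 mat)"
proof (rule eq_matI)
  fix i j assume "i < dim_row (1\<^sub>m (m * n) :: 'a mat)" "j < dim_col (1\<^sub>m (m * n) :: 'a mat)"
  then have i: "i < m * n" and j: "j < m * n" by auto
  then have "n > 0" by (cases n) auto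
  moreover have "i div n = j div n \<and> i mod n = j mod n \<longleftrightarrow> i = j"
    by (metis div_mult_mod_eq)
  ultimately show "kron (1\<^sub>m m) (1\<^sub>m n) $$ (i, j) = (1\<^sub>m (m * n) :: 'a mat) $$ (i, j)"
    using i j by (auto simp: kron_index less_mult_imp_div_less)
qed auto

lemma similar_mat_wit_kron:
  fixes A B P Q :: "'a :: comm_semiring_1 mat"
  assumes "similar_mat_wit A B P Q" "similar_mat_wit A' B' P' Q'"
  shows "similar_mat_wit (kron A A') (kron B B') (kron P P') (kron Q Q')"
proof -
  obtain n n' where c: "{A, B, P, Q} \<subseteq> carrier_mat n n" "{A', B', P', Q'} \<subseteq> carrier_mat n' n'"
    and inv: "P * Q = 1\<^sub>m n" "Q * P = 1\<^sub>m n" "P' * Q' = 1\<^sub>m n'" "Q' * P' = 1\<^sub>m n'"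
    and eq: "A = P * B * Q" "A' = P' * B' * Q'"
    using assms unfolding similar_mat_wit_def Let_def by blast
  have cPB: "P * B \<in> carrier_mat n n" "P' * B' \<in> carrier_mat n' n'" using c by auto
  have "kron P P' * kron B B' * kron Q Q' = kron (P * B) (P' * B') * kron Q Q'"
    using c by (simp add: kron_mult[of P n n P' n' n' B n B' n'])
  also have "\<dots> = kron A A'"
    using c eq kron_mult[OF cPB, of Q n Q' n'] by simp
  finally have "kron A A' = kron P P' * kron B B' * kron Q Q'" ..
  moreover have "kron P P' * kron Q Q' = 1\<^sub>m (n * n')" "kron Q Q' * kron P P' = 1\<^sub>m (n * n')"
    using c by (simp_all add: kron_mult[of P n n P' n' n' Q n Q' n'] kron_mult[of Q n n Q' n' n' P n P' n']
        inv kron_one)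
  ultimately show ?thesis
    using c by (intro similar_mat_witI[of _ _ "n * n'"]) auto
qed

lemma similar_mat_wit_add:
  assumes "similar_mat_wit A B P Q" "similar_mat_wit A' B' P Q"
  shows "similar_mat_wit (A + A') (B + B') P Q"
proof -
  obtain n where c: "{A, B, P, Q} \<subseteq> carrier_mat n n" and inv: "P * Q = 1\<^sub>m n" "Q * P = 1\<^sub>m n"
    using assms(1) unfolding similar_mat_wit_def Let_def by blast
  obtain n' where "{A', B', P, Q} \<subseteq> carrier_mat n' n'"
    using assms(2) unfolding similar_mat_wit_def Let_def by blast
  moreover have "n' = n" using calculation c by auto
  ultimately have c': "{A', B'} \<subseteq> carrier_mat n n" by simp
  have "P * B = A * P" "P * B' = A' * P"
    using similar_mat_wit_iff_intertwines[OF _ inv] assms c c' by auto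
  then have "P * (B + B') = (A + A') * P"
    using c c' by (simp add: mult_add_distrib_mat[of P n n B n B'] add_mult_distrib_mat[of A n n A' P n])
  then show ?thesis
    using similar_mat_wit_iff_intertwines[OF _ inv, of "A + A'" "B + B'"] c c' by auto
qed

lemma similar_mat_wit_one:
  assumes "similar_mat_wit A B P Q" "A \<in> carrier_mat n n"
  shows "similar_mat_wit (1\<^sub>m n) (1\<^sub>m n) P Q"
proof -
  note D = similar_mat_witD2[OF assms(2,1)]
  show ?thesis
    using similar_mat_wit_iff_intertwines[OF _ D(1,2), of "1\<^sub>m n" "1\<^sub>m n"] D(6,7) by simp
qed

lemma kron_block_diag:
  fixes A B C :: "'a :: semiring_0 mat"
  assumes A: "A \<in> carrier_mat a a" and B: "B \<in> carrier_mat b b" and C: "C \<in> carrier_mat c c"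
  shows "kron (four_block_mat A (0\<^sub>m a b) (0\<^sub>m b a) B) C
    = four_block_mat (kron A C) (0\<^sub>m (a * c) (b * c)) (0\<^sub>m (b * c) (a * c)) (kron B C)"
    (is "kron ?AB C = ?R")
proof (rule eq_matI)
  fix i j assume "i < dim_row ?R" "j < dim_col ?R"
  then have i: "i < (a + b) * c" and j: "j < (a + b) * c"
    using A B C by (simp_all add: add_mult_distrib)
  then have "c > 0" by (cases c) auto
  then have lt: "k < a * c \<longleftrightarrow> k div c < a" and mod: "k mod c < c"
    and shift: "a * c \<le> k \<Longrightarrow> (k - a * c) div c = k div c - a \<and> (k - a * c) mod c = k mod c" for k
    by (auto simp: div_less_iff_less_mult le_iff_add)
  have ij: "i div c < a + b" "j div c < a + b"
    using i j \<open>c > 0\<close> by (simp_all add: div_less_iff_less_mult)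
  have L: "kron ?AB C $$ (i, j) = ?AB $$ (i div c, j div c) * C $$ (i mod c, j mod c)"
    using A B C i j by (simp add: kron_index)
  show "kron ?AB C $$ (i, j) = ?R $$ (i, j)"
  proof (cases "i < a * c"; cases "j < a * c")
    assume "i < a * c" "j < a * c"
    then show ?thesis unfolding L using A B C i j ij lt mod by (simp add: kron_index add_mult_distrib)
  next
    assume *: "\<not> i < a * c" "\<not> j < a * c"
    then have ge: "a * c \<le> i" "a * c \<le> j" by simp_all
    have "i - a * c < b * c" "j - a * c < b * c" using i j ge by (simp_all add: add_mult_distrib)
    moreover have "\<not> i div c < a" "\<not> j div c < a" using * lt[of i] lt[of j] by simp_all
    ultimately show ?thesis unfolding L using * A B C i j ij mod shift[OF ge(1)] shift[OF ge(2)]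
      by (simp add: kron_index add_mult_distrib)
  next
    assume *: "i < a * c" "\<not> j < a * c"
    moreover have "i div c < a" "\<not> j div c < a" "j - a * c < b * c"
      using * lt[of i] lt[of j] j by (simp_all add: add_mult_distrib)
    ultimately show ?thesis unfolding L using A B C i j ij by (simp add: add_mult_distrib)
  next
    assume *: "\<not> i < a * c" "j < a * c"
    moreover have "\<not> i div c < a" "j div c < a" "i - a * c < b * c"
      using * lt[of i] lt[of j] i by (simp_all add: add_mult_distrib)
    ultimately show ?thesis unfolding L using A B C i j ij by (simp add: add_mult_distrib)
  qed
qed (use A B C in \<open>simp_all add: add_mult_distrib\<close>)

(* The Koszul sign in x(v \<otimes> w) = xv \<otimes> w + (-1)^(|x||v|) v \<otimes> xw. *)
definition super_sign_mat :: "gen \<Rightarrow> smod \<Rightarrow> complex mat" where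
  "super_sign_mat x M = (if odd_gen x then grading_mat M else 1\<^sub>m (smod_dim M))"

lemma super_sign_mat_carrier [simp]: "super_sign_mat x M \<in> carrier_mat (smod_dim M) (smod_dim M)"
  by (simp add: super_sign_mat_def)

lemma super_sign_mat_dim [simp]:
  "dim_row (super_sign_mat x M) = smod_dim M" "dim_col (super_sign_mat x M) = smod_dim M"
  using carrier_matD[OF super_sign_mat_carrier[of x M]] by auto

lemma stensor_dim [simp]: "smod_dim (stensor M N) = smod_dim M * smod_dim N"
  by (simp add: stensor_def Let_def)

lemma stensor_par: "smod_par (stensor M N) i = (smod_par M (i div smod_dim N) \<noteq> smod_par N (i mod smod_dim N))"
  by (simp add: stensor_def Let_def)

lemma stensor_act_kron:
  assumes "smod_wf M" "smod_wf N"
  shows "smod_act (stensor M N) x = kron (smod_act M x) (1\<^sub>m (smod_dim N)) + kron (super_sign_mat x M) (smod_act N x)"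
proof (rule eq_matI)
  note c = smod_wf_carrier[OF assms(1), of x] smod_wf_carrier[OF assms(2), of x]
  fix i j
  assume "i < dim_row (kron (smod_act M x) (1\<^sub>m (smod_dim N)) + kron (super_sign_mat x M) (smod_act N x))"
    "j < dim_col (kron (smod_act M x) (1\<^sub>m (smod_dim N)) + kron (super_sign_mat x M) (smod_act N x))"
  then have i: "i < smod_dim M * smod_dim N" and j: "j < smod_dim M * smod_dim N" using c by auto
  then have "smod_dim N > 0" by (cases "smod_dim N") auto
  then have "i div smod_dim N < smod_dim M" "i mod smod_dim N < smod_dim N"
    "j div smod_dim N < smod_dim M" "j mod smod_dim N < smod_dim N"
    using i j by (auto simp: less_mult_imp_div_less)
  then show "smod_act (stensor M N) x $$ (i, j)
    = (kron (smod_act M x) (1\<^sub>m (smod_dim N)) + kron (super_sign_mat x M) (smod_act N x)) $$ (i, j)"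
    using c i j
    by (simp add: stensor_def Let_def kron_index super_sign_mat_def grading_mat_def mat_diag_def parity_sign_def)
qed (use smod_wf_carrier[OF assms(1), of x] smod_wf_carrier[OF assms(2), of x] in \<open>auto simp: stensor_def Let_def\<close>)

lemma grading_mat_stensor: "grading_mat (stensor M N) = kron (grading_mat M) (grading_mat N)"
proof (rule eq_matI)
  fix i j assume "i < dim_row (kron (grading_mat M) (grading_mat N))" "j < dim_col (kron (grading_mat M) (grading_mat N))"
  then have i: "i < smod_dim M * smod_dim N" and j: "j < smod_dim M * smod_dim N" by auto
  then have "smod_dim N > 0" by (cases "smod_dim N") auto
  then have "i div smod_dim N < smod_dim M" "i mod smod_dim N < smod_dim N"
    "j div smod_dim N < smod_dim M" "j mod smod_dim N < smod_dim N"
    using i j by (auto simp: less_mult_imp_div_less)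
  moreover have "i div smod_dim N = j div smod_dim N \<and> i mod smod_dim N = j mod smod_dim N \<longleftrightarrow> i = j"
    by (metis div_mult_mod_eq)
  ultimately show "grading_mat (stensor M N) $$ (i, j) = kron (grading_mat M) (grading_mat N) $$ (i, j)"
    using i j by (auto simp: kron_index grading_mat_def mat_diag_def parity_sign_def stensor_par)
qed (auto simp: grading_mat_def mat_diag_def)

lemma stensor_cong:
  assumes "smod_iso M M'" "smod_iso N N'"
    and wf: "smod_wf M" "smod_wf M'" "smod_wf N" "smod_wf N'"
  shows "smod_iso (stensor M N) (stensor M' N')"
proof -
  obtain P Q P' Q' where "smod_iso_wit P Q M M'" "smod_iso_wit P' Q' N N'"
    using assms smod_iso_imp_wit by meson
  then have g: "similar_mat_wit (grading_mat M') (grading_mat M) P Q"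
      "similar_mat_wit (grading_mat N') (grading_mat N) P' Q'"
    and a: "similar_mat_wit (smod_act M' x) (smod_act M x) P Q"
      "similar_mat_wit (smod_act N' x) (smod_act N x) P' Q'" for x
    unfolding smod_iso_wit_def by blast+
  have d: "smod_dim M' = smod_dim M" "smod_dim N' = smod_dim N"
    using assms(1,2) by (simp_all add: smod_iso_def)
  have one: "similar_mat_wit (1\<^sub>m (smod_dim N)) (1\<^sub>m (smod_dim N)) P' Q'"
    using similar_mat_wit_one[OF g(2) grading_mat_carrier[of N', unfolded d(2)]] .
  have sign: "similar_mat_wit (super_sign_mat x M') (super_sign_mat x M) P Q" for x
    using g(1) similar_mat_wit_one[OF g(1) grading_mat_carrier[of M', unfolded d(1)]] d
    by (simp add: super_sign_mat_def)
  have "smod_iso_wit (kron P P') (kron Q Q') (stensor M N) (stensor M' N')"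
    unfolding smod_iso_wit_def grading_mat_stensor stensor_act_kron[OF wf(1,3)] stensor_act_kron[OF wf(2,4)] d
    using similar_mat_wit_kron[OF g] similar_mat_wit_add[OF similar_mat_wit_kron[OF a(1) one]
        similar_mat_wit_kron[OF sign a(2)]]
    by blast
  then show ?thesis by (rule smod_iso_wit_imp_iso) simp_all
qed

lemma stensor_pow_cong:
  assumes "smod_iso M N" "smod_wf M" "smod_wf N"
  shows "smod_iso (stensor_pow M n) (stensor_pow N n)"
  by (induction n) (simp_all add: smod_iso_refl stensor_cong assms)

lemma super_sign_mat_dsum:
  "super_sign_mat x (dsum A B) = four_block_mat (super_sign_mat x A) (0\<^sub>m (smod_dim A) (smod_dim B))
      (0\<^sub>m (smod_dim B) (smod_dim A)) (super_sign_mat x B)"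
  by (simp add: super_sign_mat_def grading_mat_dsum)

lemma stensor_dsum:
  assumes wf: "smod_wf A" "smod_wf B" "smod_wf N"
  shows "smod_iso (stensor (dsum A B) N) (dsum (stensor A N) (stensor B N))"
proof (rule smod_isoI_eq)
  show "grading_mat (dsum (stensor A N) (stensor B N)) = grading_mat (stensor (dsum A B) N)"
    by (simp add: grading_mat_dsum grading_mat_stensor
        kron_block_diag[OF grading_mat_carrier grading_mat_carrier grading_mat_carrier])
  fix x
  define a b n where "a = smod_dim A" and "b = smod_dim B" and "n = smod_dim N"
  note c = smod_wf_carrier[OF wf(1), of x, folded a_def] smod_wf_carrier[OF wf(2), of x, folded b_def]
    smod_wf_carrier[OF wf(3), of x, folded n_def]
    super_sign_mat_carrier[of x A, folded a_def] super_sign_mat_carrier[of x B, folded b_def]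
  have "smod_act (stensor (dsum A B) N) x
      = kron (four_block_mat (smod_act A x) (0\<^sub>m a b) (0\<^sub>m b a) (smod_act B x)) (1\<^sub>m n)
      + kron (four_block_mat (super_sign_mat x A) (0\<^sub>m a b) (0\<^sub>m b a) (super_sign_mat x B)) (smod_act N x)"
    using wf by (simp add: stensor_act_kron dsum_act_four_block super_sign_mat_dsum a_def b_def n_def)
  also have "\<dots> = four_block_mat (kron (smod_act A x) (1\<^sub>m n)) (0\<^sub>m (a * n) (b * n)) (0\<^sub>m (b * n) (a * n))
        (kron (smod_act B x) (1\<^sub>m n))
      + four_block_mat (kron (super_sign_mat x A) (smod_act N x)) (0\<^sub>m (a * n) (b * n)) (0\<^sub>m (b * n) (a * n))
        (kron (super_sign_mat x B) (smod_act N x))"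
    using c by (simp add: kron_block_diag[OF _ _ one_carrier_mat] kron_block_diag)
  also have "\<dots> = four_block_mat (kron (smod_act A x) (1\<^sub>m n) + kron (super_sign_mat x A) (smod_act N x))
      (0\<^sub>m (a * n) (b * n)) (0\<^sub>m (b * n) (a * n))
      (kron (smod_act B x) (1\<^sub>m n) + kron (super_sign_mat x B) (smod_act N x))"
    using c by (subst add_four_block_mat[of _ "a * n" "a * n" _ "b * n" _ "b * n"]) auto
  also have "\<dots> = smod_act (dsum (stensor A N) (stensor B N)) x"
    using wf by (simp add: stensor_act_kron dsum_act_four_block a_def b_def n_def)
  finally show "smod_act (dsum (stensor A N) (stensor B N)) x = smod_act (stensor (dsum A B) N) x" ..
qed simp

lemma stensor_zero_mod: "smod_iso (stensor zero_mod N) zero_mod"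
  by (rule smod_isoI_eq[OF smod_wf_stensor])
    (auto simp: zero_mod_def stensor_def Let_def grading_mat_def mat_diag_def intro!: eq_matI)

lemma stensor_triv_mod:
  assumes "smod_wf M"
  shows "smod_iso M (stensor triv_mod M)"
proof (rule smod_isoI_eq[OF assms])
  show "grading_mat (stensor triv_mod M) = grading_mat M"
    by (auto simp: grading_mat_def mat_diag_def stensor_par triv_mod_def intro!: eq_matI)
  show "smod_act (stensor triv_mod M) x = smod_act M x" for x
    using smod_wf_carrier[OF assms, of x] by (auto simp: stensor_def triv_mod_def Let_def intro!: eq_matI)
qed

lemma stensor_dsum_list:
  assumes "smod_wf N"
    and "\<And>y. y \<in> set ys \<Longrightarrow> smod_wf (f y) \<and> (\<forall>K\<in>set (g y). smod_wf K) \<and> smod_iso (stensor (f y) N) (dsum_list (g y))"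
  shows "smod_iso (stensor (dsum_list (map f ys)) N) (dsum_list (concat (map g ys)))"
  using assms(2)
proof (induction ys)
  case Nil
  then show ?case using stensor_zero_mod by (simp add: dsum_list_Nil)
next
  case (Cons y ys)
  then have wf: "smod_wf (f y)" "\<forall>K\<in>set (g y). smod_wf K" and iso: "smod_iso (stensor (f y) N) (dsum_list (g y))"
    by auto
  have "smod_iso (stensor (dsum_list (map f (y # ys))) N)
      (dsum (stensor (f y) N) (stensor (dsum_list (map f ys)) N))"
    unfolding list.map dsum_list_Cons using stensor_dsum[OF wf(1) _ assms(1)] by simp
  also have "smod_iso \<dots> (dsum (dsum_list (g y)) (dsum_list (concat (map g ys))))"
  proof -
    have "smod_iso (stensor (dsum_list (map f ys)) N) (dsum_list (concat (map g ys)))"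
      using Cons.prems by (intro Cons.IH) auto
    then show ?thesis using dsum_cong[OF iso] by simp
  qed
  also have "smod_iso \<dots> (dsum_list (g y @ concat (map g ys)))"
    by (rule dsum_list_append[OF wf(2)])
  finally show ?case by simp
qed


(* Integer matrices as nested lists, so that identities between concrete matrices can be
   decided by code_simp. *)
definition int_mat :: "nat \<Rightarrow> int list list \<Rightarrow> complex mat" where
  "int_mat n X = mat n n (\<lambda>(i,j). of_int (X ! i ! j))"

definition lmat_mult :: "nat \<Rightarrow> int list list \<Rightarrow> int list list \<Rightarrow> int list list" where
  "lmat_mult n X Y = map (\<lambda>i. map (\<lambda>j. sum_list (map (\<lambda>k. X ! i ! k * Y ! k ! j) [0..<n])) [0..<n]) [0..<n]"

definition lmat_add :: "nat \<Rightarrow> int list list \<Rightarrow> int list list \<Rightarrow> int list list" where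
  "lmat_add n X Y = map (\<lambda>i. map (\<lambda>j. X ! i ! j + Y ! i ! j) [0..<n]) [0..<n]"

definition lmat_kron :: "nat \<Rightarrow> nat \<Rightarrow> int list list \<Rightarrow> int list list \<Rightarrow> int list list" where
  "lmat_kron m n X Y = map (\<lambda>i. map (\<lambda>j. X ! (i div n) ! (j div n) * Y ! (i mod n) ! (j mod n)) [0..<m * n]) [0..<m * n]"

definition lmat_block_diag :: "nat \<Rightarrow> nat \<Rightarrow> int list list \<Rightarrow> int list list \<Rightarrow> int list list" where
  "lmat_block_diag m n X Y = map (\<lambda>i. map (\<lambda>j. if i < m \<and> j < m then X ! i ! j
     else if m \<le> i \<and> m \<le> j then Y ! (i - m) ! (j - m) else 0) [0..<m + n]) [0..<m + n]"

definition lmat_one :: "nat \<Rightarrow> int list list" where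
  "lmat_one n = map (\<lambda>i. map (\<lambda>j. if i = j then 1 else 0) [0..<n]) [0..<n]"

lemma int_mat_carrier [simp]: "int_mat n X \<in> carrier_mat n n"
  and int_mat_dim [simp]: "dim_row (int_mat n X) = n" "dim_col (int_mat n X) = n"
  by (simp_all add: int_mat_def)

lemma int_mat_index: "i < n \<Longrightarrow> j < n \<Longrightarrow> int_mat n X $$ (i,j) = of_int (X ! i ! j)"
  by (simp add: int_mat_def)

lemma int_mat_mult: "int_mat n X * int_mat n Y = int_mat n (lmat_mult n X Y)"
proof (rule eq_matI)
  fix i j assume "i < dim_row (int_mat n (lmat_mult n X Y))" "j < dim_col (int_mat n (lmat_mult n X Y))"
  then have i: "i < n" and j: "j < n" by auto
  have "(int_mat n X * int_mat n Y) $$ (i,j) = (\<Sum>k<n. of_int (X ! i ! k * Y ! k ! j))"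
    by (subst index_mult_mat_sum[OF int_mat_carrier int_mat_carrier i j]) (auto simp: int_mat_index i j)
  also have "\<dots> = of_int (sum_list (map (\<lambda>k. X ! i ! k * Y ! k ! j) [0..<n]))"
    by (simp add: sum_set_upt_conv_sum_list_nat[symmetric] lessThan_atLeast0)
  finally show "(int_mat n X * int_mat n Y) $$ (i,j) = int_mat n (lmat_mult n X Y) $$ (i,j)"
    using i j by (simp add: int_mat_index lmat_mult_def)
qed auto

lemma int_mat_add: "int_mat n X + int_mat n Y = int_mat n (lmat_add n X Y)"
  by (rule eq_matI) (auto simp: int_mat_def lmat_add_def)

lemma int_mat_kron: "kron (int_mat m X) (int_mat n Y) = int_mat (m * n) (lmat_kron m n X Y)"
proof (rule eq_matI)
  fix i j assume "i < dim_row (int_mat (m * n) (lmat_kron m n X Y))" "j < dim_col (int_mat (m * n) (lmat_kron m n X Y))"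
  then have i: "i < m * n" and j: "j < m * n" by auto
  then have "n > 0" by (cases n) auto
  then have "i div n < m" "i mod n < n" "j div n < m" "j mod n < n"
    using i j by (auto simp: less_mult_imp_div_less)
  then show "kron (int_mat m X) (int_mat n Y) $$ (i, j) = int_mat (m * n) (lmat_kron m n X Y) $$ (i, j)"
    using i j by (simp add: kron_index int_mat_index lmat_kron_def)
qed auto

lemma int_mat_block_diag:
  "four_block_mat (int_mat m X) (0\<^sub>m m n) (0\<^sub>m n m) (int_mat n Y) = int_mat (m + n) (lmat_block_diag m n X Y)"
  by (rule eq_matI) (auto simp: int_mat_def lmat_block_diag_def)

lemma int_mat_one: "1\<^sub>m n = int_mat n (lmat_one n)"
  by (rule eq_matI) (auto simp: int_mat_def lmat_one_def)

section \<open>The modules III\<close>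

lemma III_dim [simp]: "smod_dim (III \<gamma> p) = 4"
  by (simp add: III_def)

lemma less_4_cases: "(i :: nat) < 4 \<longleftrightarrow> i = 0 \<or> i = 1 \<or> i = 2 \<or> i = 3"
  by auto

definition parity_lmat :: "bool \<Rightarrow> int list list" where
  "parity_lmat p = (let s = if p then -1 else 1 in [[s, 0, 0, 0], [0, -s, 0, 0], [0, 0, -s, 0], [0, 0, 0, s]])"

lemma grading_mat_III: "grading_mat (III \<gamma> p) = int_mat 4 (parity_lmat p)"
  by (rule eq_matI)
    (auto simp: less_4_cases grading_mat_def mat_diag_def parity_sign_def int_mat_def parity_lmat_def III_def Let_def)

(* The entry for G is a dummy: G acts diagonally, see III_act_G. *)
definition III_lmat :: "gen \<Rightarrow> int list list" where
  "III_lmat x = (case x of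
       Qp \<Rightarrow> [[0, 0, 0, 0], [1, 0, 0, 0], [0, 0, 0, 0], [0, 0, 1, 0]]
     | Qm \<Rightarrow> [[0, 0, 0, 0], [0, 0, 0, 0], [1, 0, 0, 0], [0, -1, 0, 0]]
     | _ \<Rightarrow> [[0, 0, 0, 0], [0, 0, 0, 0], [0, 0, 0, 0], [0, 0, 0, 0]])"

lemma III_act_lmat: "x \<noteq> G \<Longrightarrow> smod_act (III \<gamma> p) x = int_mat 4 (III_lmat x)"
  by (rule eq_matI) (cases x; auto simp: less_4_cases III_def int_mat_def III_lmat_def)+

definition III_weights :: "int list" where
  "III_weights = [-1, 0, -2, -1]"

lemma III_act_G: "smod_act (III \<gamma> p) G = mat_diag 4 (\<lambda>i. of_int (\<gamma> + III_weights ! i))"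
  by (rule eq_matI) (auto simp: less_4_cases III_def mat_diag_def III_weights_def)

lemma stensor_act_G_diag:
  assumes "smod_dim M = m" "smod_dim N = n"
    and "smod_act M G = mat_diag m \<alpha>" "smod_act N G = mat_diag n \<beta>"
  shows "smod_act (stensor M N) G = mat_diag (m * n) (\<lambda>i. \<alpha> (i div n) + \<beta> (i mod n))"
proof (rule eq_matI)
  fix i j assume "i < dim_row (mat_diag (m * n) (\<lambda>i. \<alpha> (i div n) + \<beta> (i mod n)))"
    "j < dim_col (mat_diag (m * n) (\<lambda>i. \<alpha> (i div n) + \<beta> (i mod n)))"
  then have i: "i < m * n" and j: "j < m * n" by (simp_all add: mat_diag_def)
  then have "n > 0" by (cases n) auto
  then have "i div n < m" "i mod n < n" "j div n < m" "j mod n < n"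
    using i j by (auto simp: less_mult_imp_div_less)
  moreover have "i div n = j div n \<and> i mod n = j mod n \<longleftrightarrow> i = j"
    by (metis div_mult_mod_eq)
  ultimately show "smod_act (stensor M N) G $$ (i, j) = mat_diag (m * n) (\<lambda>i. \<alpha> (i div n) + \<beta> (i mod n)) $$ (i, j)"
    using i j assms by (auto simp: stensor_def Let_def mat_diag_def)
qed (simp_all add: stensor_def Let_def mat_diag_def assms)

lemma dsum_act_G_diag:
  assumes "smod_dim M = m" "smod_dim N = n"
    and "smod_act M G = mat_diag m \<alpha>" "smod_act N G = mat_diag n \<beta>"
  shows "smod_act (dsum M N) G = mat_diag (m + n) (\<lambda>i. if i < m then \<alpha> i else \<beta> (i - m))"
  by (rule eq_matI) (auto simp: dsum_def Let_def mat_diag_def assms)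

lemma zero_mod_act: "smod_act zero_mod x = int_mat 0 []"
  and grading_mat_zero_mod: "grading_mat zero_mod = int_mat 0 []"
  by (auto simp: zero_mod_def grading_mat_def mat_diag_def intro!: eq_matI)

lemma zero_mod_act_G_diag: "smod_act zero_mod G = mat_diag 0 \<alpha>"
  by (auto simp: zero_mod_def mat_diag_def intro!: eq_matI)

section \<open>Tensoring with III 1\<close>

definition lmat_block_diag4 :: "int list list \<Rightarrow> int list list \<Rightarrow> int list list \<Rightarrow> int list list \<Rightarrow> int list list" where
  "lmat_block_diag4 X1 X2 X3 X4 =
     lmat_block_diag 4 12 X1 (lmat_block_diag 4 8 X2 (lmat_block_diag 4 4 X3 (lmat_block_diag 4 0 X4 [])))"

definition tensor_III_lmat :: "bool \<Rightarrow> gen \<Rightarrow> int list list" where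
  "tensor_III_lmat q x = lmat_add 16 (lmat_kron 4 4 (III_lmat x) (lmat_one 4))
     (lmat_kron 4 4 (if odd_gen x then parity_lmat q else lmat_one 4) (III_lmat x))"

(* G-weights, shifted by -\<gamma>, of the standard basis vectors of III_\<gamma> \<otimes> III_1 and of the
   direct sum below. *)
definition tensor_III_weight :: "nat \<Rightarrow> int" where
  "tensor_III_weight j = III_weights ! (j div 4) + 1 + III_weights ! (j mod 4)"

definition dsum_III_weight :: "nat \<Rightarrow> int" where
  "dsum_III_weight i = [1, 0, 0, -1] ! (i div 4) + III_weights ! (i mod 4)"

lemma dsum_list_III_dim: "smod_dim (dsum_list (map (case_prod III) xs)) = 4 * length xs"
  by (induction xs) (auto simp: dsum_list_Nil dsum_list_Cons)

lemma dsum_list_III_act_G: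
  "smod_act (dsum_list (map (case_prod III) xs)) G
     = mat_diag (4 * length xs) (\<lambda>i. of_int (fst (xs ! (i div 4)) + III_weights ! (i mod 4)))"
proof (induction xs)
  case Nil
  then show ?case by (simp add: dsum_list_Nil zero_mod_act_G_diag)
next
  case (Cons y xs)
  obtain \<gamma> p where y: "y = (\<gamma>, p)" by fastforce
  have "smod_act (dsum_list (map (case_prod III) (y # xs))) G
      = mat_diag (4 + 4 * length xs) (\<lambda>i. if i < 4 then of_int (\<gamma> + III_weights ! i)
          else of_int (fst (xs ! ((i - 4) div 4)) + III_weights ! ((i - 4) mod 4)))"
    unfolding y list.map dsum_list_Cons
    by (simp add: dsum_act_G_diag[OF III_dim dsum_list_III_dim III_act_G Cons.IH])
  also have "\<dots> = mat_diag (4 + 4 * length xs)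
      (\<lambda>i. of_int (fst ((y # xs) ! (i div 4)) + III_weights ! (i mod 4)))"
  proof (rule mat_diag_cong)
    fix i assume "i < 4 + 4 * length xs"
    show "(if i < 4 then of_int (\<gamma> + III_weights ! i)
          else of_int (fst (xs ! ((i - 4) div 4)) + III_weights ! ((i - 4) mod 4)))
        = (of_int (fst ((y # xs) ! (i div 4)) + III_weights ! (i mod 4)) :: complex)"
      by (cases "i < 4") (auto simp: y div_if mod_if nth_Cons')
  qed
  finally show ?case by simp
qed

(* The columns of III_tensor_basis_change_inv are the images in III_\<gamma> \<otimes> III_1 of the standard
   bases of the four summands; e.g. the first summand is generated by v \<otimes> Q_+ v', where v and v'
   are the cyclic vectors of the factors. *)
definition III_tensor_basis_change :: "bool \<Rightarrow> int list list" where
  "III_tensor_basis_change q = (let s = if q then 1 else -1 in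
     [[ 0, 1, 0, 0, s, 0, 0, 0, 0, 0, 0, 0, 0, 0, 0, 0],
      [ 0, 0, 0, 0, 0, 1, 0, 0, 0, 0, 0, 0, 0, 0, 0, 0],
      [ 0, 0, 0, 0, 0, 0, 0, 0, 0, 1, 0, 0,-s, 0, 0, 0],
      [ 0, 0, 0, 0, 0, 0, 0, 0, 0, 0, 0, 0, 0, 1, 0, 0],
      [ 1, 0, 0, 0, 0, 0, 0, 0, 0, 0, 0, 0, 0, 0, 0, 0],
      [ 0, 0, 0, 0, 1, 0, 0, 0, 0, 0, 0, 0, 0, 0, 0, 0],
      [ 0, 0, 0, 0, 0, 0, 0, 0, 1, 0, 0, 0, 0, 0, 0, 0],
      [ 0, 0, 0, 0, 0, 0, 0, 0, 0, 0, 0, 0, 1, 0, 0, 0],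
      [ 0, 0, 0, 1, 0, 0, s, 0, 0,-s, 0, 0, 1, 0, 0, 0],
      [ 0, 0, 0, 0, 0, 0, 0, 1, 0, 0, 0, 0, 0,-s, 0, 0],
      [ 0, 0, 0, 0, 0, 0, 0, 0, 0, 0, 0, 1, 0, 0,-s, 0],
      [ 0, 0, 0, 0, 0, 0, 0, 0, 0, 0, 0, 0, 0, 0, 0, 1],
      [ 0, 0, 1, 0, 0, 0, 0, 0, s, 0, 0, 0, 0, 0, 0, 0],
      [ 0, 0, 0, 0, 0, 0, 1, 0, 0, 0, 0, 0, s, 0, 0, 0],
      [ 0, 0, 0, 0, 0, 0, 0, 0, 0, 0, 1, 0, 0, 0, 0, 0],
      [ 0, 0, 0, 0, 0, 0, 0, 0, 0, 0, 0, 0, 0, 0, 1, 0]])"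

definition III_tensor_basis_change_inv :: "bool \<Rightarrow> int list list" where
  "III_tensor_basis_change_inv q = (let s = if q then 1 else -1 in
     [[ 0, 0, 0, 0, 1, 0, 0, 0, 0, 0, 0, 0, 0, 0, 0, 0],
      [ 1, 0, 0, 0, 0,-s, 0, 0, 0, 0, 0, 0, 0, 0, 0, 0],
      [ 0, 0, 0, 0, 0, 0,-s, 0, 0, 0, 0, 0, 1, 0, 0, 0],
      [ 0, 0, s, 0, 0, 0, 0, 1, 1, 0, 0, 0, 0,-s, 0, 0],
      [ 0, 0, 0, 0, 0, 1, 0, 0, 0, 0, 0, 0, 0, 0, 0, 0],
      [ 0, 1, 0, 0, 0, 0, 0, 0, 0, 0, 0, 0, 0, 0, 0, 0],
      [ 0, 0, 0, 0, 0, 0, 0,-s, 0, 0, 0, 0, 0, 1, 0, 0],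
      [ 0, 0, 0, s, 0, 0, 0, 0, 0, 1, 0, 0, 0, 0, 0, 0],
      [ 0, 0, 0, 0, 0, 0, 1, 0, 0, 0, 0, 0, 0, 0, 0, 0],
      [ 0, 0, 1, 0, 0, 0, 0, s, 0, 0, 0, 0, 0, 0, 0, 0],
      [ 0, 0, 0, 0, 0, 0, 0, 0, 0, 0, 0, 0, 0, 0, 1, 0],
      [ 0, 0, 0, 0, 0, 0, 0, 0, 0, 0, 1, 0, 0, 0, 0, s],
      [ 0, 0, 0, 0, 0, 0, 0, 1, 0, 0, 0, 0, 0, 0, 0, 0],
      [ 0, 0, 0, 1, 0, 0, 0, 0, 0, 0, 0, 0, 0, 0, 0, 0],
      [ 0, 0, 0, 0, 0, 0, 0, 0, 0, 0, 0, 0, 0, 0, 0, 1],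
      [ 0, 0, 0, 0, 0, 0, 0, 0, 0, 0, 0, 1, 0, 0, 0, 0]])"

lemma III_tensor_basis_change_inverse:
  "\<forall>q. lmat_mult 16 (III_tensor_basis_change q) (III_tensor_basis_change_inv q) = lmat_one 16
     \<and> lmat_mult 16 (III_tensor_basis_change_inv q) (III_tensor_basis_change q) = lmat_one 16"
  by code_simp

lemma III_tensor_basis_change_grading:
  "\<forall>q p. lmat_mult 16 (III_tensor_basis_change q) (lmat_kron 4 4 (parity_lmat q) (parity_lmat p))
     = lmat_mult 16 (lmat_block_diag4 (parity_lmat (q = p)) (parity_lmat (q \<noteq> p)) (parity_lmat (q \<noteq> p))
         (parity_lmat (q = p))) (III_tensor_basis_change q)"
  by code_simp

lemma III_tensor_basis_change_act:
  "\<forall>q. \<forall>x\<in>{H, Qp, Qm}. lmat_mult 16 (III_tensor_basis_change q) (tensor_III_lmat q x)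
     = lmat_mult 16 (lmat_block_diag4 (III_lmat x) (III_lmat x) (III_lmat x) (III_lmat x)) (III_tensor_basis_change q)"
  by code_simp

lemma III_tensor_basis_change_weight:
  "\<forall>q. list_all (\<lambda>i. list_all (\<lambda>j. III_tensor_basis_change q ! i ! j = 0 \<or> dsum_III_weight i = tensor_III_weight j)
     [0..<16]) [0..<16]"
  by code_simp

lemma grading_mat_stensor_III_III1:
  "grading_mat (stensor (III a q) (III 1 p)) = int_mat 16 (lmat_kron 4 4 (parity_lmat q) (parity_lmat p))"
  by (simp add: grading_mat_stensor grading_mat_III int_mat_kron)

lemma stensor_III_III1_act:
  assumes "x \<noteq> G"
  shows "smod_act (stensor (III a q) (III 1 p)) x = int_mat 16 (tensor_III_lmat q x)"
proof -
  have "super_sign_mat x (III a q) = int_mat 4 (if odd_gen x then parity_lmat q else lmat_one 4)"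
    by (simp add: super_sign_mat_def grading_mat_III int_mat_one)
  then show ?thesis
    using assms
    by (simp add: stensor_act_kron III_act_lmat int_mat_one[of 4] int_mat_kron int_mat_add tensor_III_lmat_def)
qed

lemma stensor_III_III1_act_G:
  "smod_act (stensor (III a q) (III 1 p)) G = mat_diag 16 (\<lambda>j. of_int (a + tensor_III_weight j))"
  unfolding stensor_act_G_diag[OF III_dim III_dim III_act_G III_act_G]
  by (simp add: tensor_III_weight_def algebra_simps)

lemma grading_mat_dsum_list_III4:
  "grading_mat (dsum_list [III \<gamma>1 p1, III \<gamma>2 p2, III \<gamma>3 p3, III \<gamma>4 p4])
     = int_mat 16 (lmat_block_diag4 (parity_lmat p1) (parity_lmat p2) (parity_lmat p3) (parity_lmat p4))"
  by (simp add: dsum_list_Cons dsum_list_Nil grading_mat_dsum grading_mat_III grading_mat_zero_mod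
      int_mat_block_diag lmat_block_diag4_def)

lemma dsum_list_III4_act:
  "x \<noteq> G \<Longrightarrow> smod_act (dsum_list [III \<gamma>1 p1, III \<gamma>2 p2, III \<gamma>3 p3, III \<gamma>4 p4]) x
     = int_mat 16 (lmat_block_diag4 (III_lmat x) (III_lmat x) (III_lmat x) (III_lmat x))"
  by (simp add: dsum_list_Cons dsum_list_Nil dsum_act_four_block III_act_lmat zero_mod_act
      int_mat_block_diag lmat_block_diag4_def)

lemma dsum_list_III4_act_G:
  "smod_act (dsum_list [III (a + 1) p1, III a p2, III a p3, III (a - 1) p4]) G
     = mat_diag 16 (\<lambda>i. of_int (a + dsum_III_weight i))"
proof -
  have "dsum_list [III (a + 1) p1, III a p2, III a p3, III (a - 1) p4]
      = dsum_list (map (case_prod III) [(a + 1, p1), (a, p2), (a, p3), (a - 1, p4)])"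
    by simp
  also have "smod_act \<dots> G = mat_diag 16
      (\<lambda>i. of_int (fst ([(a + 1, p1), (a, p2), (a, p3), (a - 1, p4)] ! (i div 4)) + III_weights ! (i mod 4)))"
    by (simp only: dsum_list_III_act_G) simp
  also have "\<dots> = mat_diag 16 (\<lambda>i. of_int (a + dsum_III_weight i))"
  proof (rule mat_diag_cong)
    fix i :: nat assume "i < 16"
    then have "i div 4 < 4" by simp
    then show "of_int (fst ([(a + 1, p1), (a, p2), (a, p3), (a - 1, p4)] ! (i div 4)) + III_weights ! (i mod 4))
        = (of_int (a + dsum_III_weight i) :: complex)"
      unfolding less_4_cases dsum_III_weight_def by auto
  qed
  finally show ?thesis .
qed

lemma stensor_III_III1:
  "smod_iso (stensor (III a q) (III 1 p))
     (dsum_list [III (a + 1) (q = p), III a (q \<noteq> p), III a (q \<noteq> p), III (a - 1) (q = p)])"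
  (is "smod_iso ?T ?D")
proof -
  define T S where "T = int_mat 16 (III_tensor_basis_change q)"
    and "S = int_mat 16 (III_tensor_basis_change_inv q)"
  have act_G: "T * smod_act ?T G = smod_act ?D G * T"
  proof -
    have "\<forall>i<16. \<forall>j<16. T $$ (i,j) \<noteq> 0 \<longrightarrow> dsum_III_weight i = tensor_III_weight j"
      using III_tensor_basis_change_weight[rule_format, of q]
      by (auto simp: T_def int_mat_index list_all_iff atLeast0LessThan)
    then show ?thesis
      using mat_diag_intertwine_iff[of T 16 16 "\<lambda>j. of_int (a + tensor_III_weight j)"
          "\<lambda>i. of_int (a + dsum_III_weight i)"]
      by (simp add: T_def stensor_III_III1_act_G dsum_list_III4_act_G)
  qed
  have act: "T * smod_act ?T x = smod_act ?D x * T" if "x \<noteq> G" for x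
  proof -
    have "x \<in> {H, Qp, Qm}" using that by (cases x) auto
    from III_tensor_basis_change_act[rule_format, OF this, of q] show ?thesis
      using that by (simp add: T_def int_mat_mult stensor_III_III1_act dsum_list_III4_act)
  qed
  show ?thesis
  proof (rule smod_isoI[of T 16 S])
    show "T \<in> carrier_mat 16 16" "S \<in> carrier_mat 16 16" by (simp_all add: T_def S_def)
    show "T * S = 1\<^sub>m 16" "S * T = 1\<^sub>m 16"
      using III_tensor_basis_change_inverse[rule_format, of q]
      by (simp_all add: T_def S_def int_mat_mult int_mat_one)
    show "smod_dim ?T = 16" "smod_dim ?D = 16" by (simp_all add: dsum_list_Cons dsum_list_Nil)
    show "T * grading_mat ?T = grading_mat ?D * T"
      using III_tensor_basis_change_grading[rule_format, of q p]
      by (simp add: T_def grading_mat_stensor_III_III1 grading_mat_dsum_list_III4 int_mat_mult)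
    show "T * smod_act ?T x = smod_act ?D x * T" for x
      using act_G act by (cases "x = G") auto
  qed
qed

section \<open>The adjoint module\<close>

definition adjoint_lmat :: "gen \<Rightarrow> int list list" where
  "adjoint_lmat x = (case x of
       H \<Rightarrow> [[0, 0, 0, 0], [0, 0, 0, 0], [0, 0, 0, 0], [0, 0, 0, 0]]
     | G \<Rightarrow> [[0, 0, 0, 0], [0, 0, 0, 0], [0, 0, 1, 0], [0, 0, 0, -1]]
     | Qp \<Rightarrow> [[0, 0, 0, 1], [0, 0, 0, 0], [0, -1, 0, 0], [0, 0, 0, 0]]
     | Qm \<Rightarrow> [[0, 0, 1, 0], [0, 0, 0, 0], [0, 0, 0, 0], [0, 1, 0, 0]])"

lemma adjoint_mod_dim [simp]: "smod_dim adjoint_mod = 4"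
  by (simp add: adjoint_mod_def)

lemma gen_of_numeral: "gen_of 2 = Qp" "gen_of 3 = Qm"
  by (simp_all add: numeral_eq_Suc)

lemma adjoint_mod_act: "smod_act adjoint_mod x = int_mat 4 (adjoint_lmat x)"
  by (rule eq_matI)
    (cases x; auto simp: less_4_cases adjoint_mod_def int_mat_def adjoint_lmat_def gen_of_numeral)+

lemma grading_mat_adjoint_mod:
  "grading_mat adjoint_mod = int_mat 4 [[1, 0, 0, 0], [0, 1, 0, 0], [0, 0, -1, 0], [0, 0, 0, -1]]"
  by (rule eq_matI)
    (auto simp: less_4_cases grading_mat_def mat_diag_def parity_sign_def int_mat_def adjoint_mod_def gen_of_numeral)

definition III1_lmat :: "gen \<Rightarrow> int list list" where
  "III1_lmat x = (if x = G then [[0, 0, 0, 0], [0, 1, 0, 0], [0, 0, -1, 0], [0, 0, 0, 0]] else III_lmat x)"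

lemma III1_act: "smod_act (III 1 p) x = int_mat 4 (III1_lmat x)"
proof (cases "x = G")
  case True
  then show ?thesis
    by (auto simp: III_act_G less_4_cases mat_diag_def int_mat_def III1_lmat_def III_weights_def intro!: eq_matI)
qed (simp add: III_act_lmat III1_lmat_def)

(* H, G, Q_+, Q_- \<mapsto> Q_+Q_-v, v, -Q_+v, Q_-v, because [Q_+,G] = -Q_+, [Q_-,G] = Q_- and
   [Q_+,Q_-] = H. *)
definition adjoint_basis_change :: "int list list" where
  "adjoint_basis_change = [[0, 1, 0, 0], [0, 0, -1, 0], [0, 0, 0, 1], [1, 0, 0, 0]]"

definition adjoint_basis_change_inv :: "int list list" where
  "adjoint_basis_change_inv = [[0, 0, 0, 1], [1, 0, 0, 0], [0, -1, 0, 0], [0, 0, 1, 0]]"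

lemma adjoint_basis_change_props:
  "lmat_mult 4 adjoint_basis_change adjoint_basis_change_inv = lmat_one 4
   \<and> lmat_mult 4 adjoint_basis_change_inv adjoint_basis_change = lmat_one 4
   \<and> lmat_mult 4 adjoint_basis_change [[1, 0, 0, 0], [0, 1, 0, 0], [0, 0, -1, 0], [0, 0, 0, -1]]
       = lmat_mult 4 (parity_lmat False) adjoint_basis_change
   \<and> (\<forall>x\<in>{H, G, Qp, Qm}. lmat_mult 4 adjoint_basis_change (adjoint_lmat x)
       = lmat_mult 4 (III1_lmat x) adjoint_basis_change)"
  by code_simp

lemma adjoint_mod_iso_III1: "smod_iso adjoint_mod (III 1 False)"
proof (rule smod_isoI[of "int_mat 4 adjoint_basis_change" 4 "int_mat 4 adjoint_basis_change_inv"])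
  note props = adjoint_basis_change_props
  show "int_mat 4 adjoint_basis_change * int_mat 4 adjoint_basis_change_inv = 1\<^sub>m 4"
    "int_mat 4 adjoint_basis_change_inv * int_mat 4 adjoint_basis_change = 1\<^sub>m 4"
    using props by (simp_all add: int_mat_mult int_mat_one)
  show "int_mat 4 adjoint_basis_change * grading_mat adjoint_mod
      = grading_mat (III 1 False) * int_mat 4 adjoint_basis_change"
    using props by (simp add: grading_mat_adjoint_mod grading_mat_III int_mat_mult)
  show "int_mat 4 adjoint_basis_change * smod_act adjoint_mod x
      = smod_act (III 1 False) x * int_mat 4 adjoint_basis_change" for x
    using props by (cases x) (simp_all add: adjoint_mod_act III1_act int_mat_mult)
qed simp_all

section \<open>Multiplicities\<close>

(* Vanishes for negative k, where nat k = 0 would give m choose 0 = 1. *)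
definition binom_int :: "nat \<Rightarrow> int \<Rightarrow> nat" where
  "binom_int m k = (if k < 0 then 0 else m choose nat k)"

lemma binom_int_add_2:
  "binom_int (m + 2) (k + 1) = binom_int m (k + 1) + 2 * binom_int m k + binom_int m (k - 1)"
proof (cases "k < 1")
  case True
  then consider "k < -1" | "k = -1" | "k = 0" by linarith
  then show ?thesis by cases (simp_all add: binom_int_def)
next
  case False
  then obtain j where k: "k = int j + 1" by (metis add.commute le_add_diff_inverse2 nat_int not_less zle_iff_zadd)
  then have "nat (k + 1) = Suc (Suc j)" "nat k = Suc j" "nat (k - 1) = j" by auto
  moreover have "Suc (Suc m) choose Suc (Suc j) = (m choose Suc (Suc j)) + 2 * (m choose Suc j) + (m choose j)"
    by simp
  ultimately show ?thesis using k by (simp add: binom_int_def)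
qed

definition III1_power_weights :: "nat \<Rightarrow> int list" where
  "III1_power_weights n =
     concat (map (\<lambda>l. replicate ((2 * n - 2) choose nat (int n - l)) l) [2 - int n..int n])"

lemma count_mset_concat_replicate:
  "distinct L \<Longrightarrow> count (mset (concat (map (\<lambda>l. replicate (c l) l) L))) x = (if x \<in> set L then c x else 0)"
  by (induction L) auto

lemma count_III1_power_weights:
  assumes "n \<ge> 1"
  shows "count (mset (III1_power_weights n)) l = binom_int (2 * n - 2) (int n - l)"
proof -
  have "l < 2 - int n \<Longrightarrow> (2 * n - 2) choose nat (int n - l) = 0"
    using assms by (simp add: binomial_eq_0)
  then show ?thesis
    unfolding III1_power_weights_def count_mset_concat_replicate[OF distinct_upto]
    by (auto simp: binom_int_def)
qed

lemma count_mset_concat_spread: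
  "count (mset (concat (map (\<lambda>l. [l + 1, l, l, l - 1]) L))) (l :: int)
     = count (mset L) (l - 1) + 2 * count (mset L) l + count (mset L) (l + 1)"
  by (induction L) auto

lemma III1_power_weights_Suc:
  assumes "n \<ge> 1"
  shows "mset (concat (map (\<lambda>l. [l + 1, l, l, l - 1]) (III1_power_weights n))) = mset (III1_power_weights (Suc n))"
proof (rule multiset_eqI)
  fix l :: int
  have "2 * Suc n - 2 = (2 * n - 2) + 2" using assms by simp
  then show "count (mset (concat (map (\<lambda>l. [l + 1, l, l, l - 1]) (III1_power_weights n)))) l
      = count (mset (III1_power_weights (Suc n))) l"
    using binom_int_add_2[of "2 * n - 2" "int n - l"] assms
    by (simp add: count_mset_concat_spread count_III1_power_weights algebra_simps)
qed

lemma III1_power_decomposition: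
  assumes "n \<ge> 1"
  shows "\<exists>xs. smod_iso (stensor_pow (III 1 p) n) (dsum_list (map (case_prod III) xs))
      \<and> mset (map fst xs) = mset (III1_power_weights n)"
  using assms
proof (induction n rule: dec_induct)
  case base
  have "smod_iso (stensor_pow (III 1 p) 1) (III 1 p)"
    using smod_iso_sym[OF stensor_triv_mod] by simp
  also have "smod_iso \<dots> (dsum_list (map (case_prod III) [(1, p)]))"
    using dsum_zero_mod_right by (simp add: dsum_list_Cons dsum_list_Nil)
  finally show ?case by (intro exI[of _ "[(1, p)]"]) (simp_all add: III1_power_weights_def)
next
  case (step n)
  then obtain xs where iso: "smod_iso (stensor_pow (III 1 p) n) (dsum_list (map (case_prod III) xs))"
    and weights: "mset (map fst xs) = mset (III1_power_weights n)"
    by blast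
  define summands :: "int \<times> bool \<Rightarrow> (int \<times> bool) list"
    where "summands = (\<lambda>(\<gamma>, q). [(\<gamma> + 1, q = p), (\<gamma>, q \<noteq> p), (\<gamma>, q \<noteq> p), (\<gamma> - 1, q = p)])"
  have "smod_iso (stensor_pow (III 1 p) (Suc n)) (stensor (dsum_list (map (case_prod III) xs)) (III 1 p))"
    using stensor_cong[OF iso smod_iso_refl] by simp
  also have "smod_iso \<dots> (dsum_list (concat (map (\<lambda>y. map (case_prod III) (summands y)) xs)))"
  proof (rule stensor_dsum_list)
    fix y :: "int \<times> bool"
    obtain \<gamma> q where "y = (\<gamma>, q)" by fastforce
    then show "smod_wf (case_prod III y) \<and> (\<forall>K\<in>set (map (case_prod III) (summands y)). smod_wf K)
      \<and> smod_iso (stensor (case_prod III y) (III 1 p)) (dsum_list (map (case_prod III) (summands y)))"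
      using stensor_III_III1[of \<gamma> q p] by (simp add: summands_def)
  qed simp
  finally have "smod_iso (stensor_pow (III 1 p) (Suc n)) (dsum_list (map (case_prod III) (concat (map summands xs))))"
    by (simp add: map_concat comp_def)
  moreover have "map fst (concat (map summands xs)) = concat (map (\<lambda>l. [l + 1, l, l, l - 1]) (map fst xs))"
    by (induction xs) (auto simp: summands_def)
  then have "mset (map fst (concat (map summands xs))) = mset (III1_power_weights (Suc n))"
    using III1_power_weights_Suc[OF step.hyps(1)] weights
    by (metis (no_types) count_mset_concat_spread multiset_eqI)
  ultimately show ?case by blast
qed

lemma dsum_list_III_regroup:
  assumes weights: "mset (map fst xs) = mset (concat (map (\<lambda>l. replicate (c l) l) L))" and "distinct L"
  shows "\<exists>par. smod_iso (dsum_list (map (case_prod III) xs))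
    (dsum_list (concat (map (\<lambda>l. map (\<lambda>k. III l (par l k)) [0..<c l]) L)))"
proof -
  define F where "F l = filter (\<lambda>y. fst y = l) xs" for l
  define par where "par l k = snd (F l ! k)" for l k
  have "length (F l) = count (mset (map fst xs)) l" for l
    unfolding F_def by (induction xs) auto
  then have len: "length (F l) = c l" if "l \<in> set L" for l
    using that weights count_mset_concat_replicate[OF \<open>distinct L\<close>] by simp
  have block: "map (\<lambda>k. III l (par l k)) [0..<c l] = map (case_prod III) (F l)" if "l \<in> set L" for l
  proof (rule nth_equalityI)
    fix k assume "k < length (map (\<lambda>k. III l (par l k)) [0..<c l])"
    then have "F l ! k \<in> set (F l)" using len[OF that] by simp
    then have "fst (F l ! k) = l" by (simp add: F_def)
    then show "map (\<lambda>k. III l (par l k)) [0..<c l] ! k = map (case_prod III) (F l) ! k"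
      using \<open>k < _\<close> len[OF that] by (simp add: par_def split_beta)
  qed (simp add: len[OF that])
  have "fst y \<in> set L" if "y \<in> set xs" for y
  proof -
    have "fst y \<in># mset (map fst xs)" using that by simp
    then show ?thesis unfolding weights by (auto split: if_splits)
  qed
  moreover have "count (mset (concat (map F L'))) y = (if fst y \<in> set L' then count (mset xs) y else 0)"
    if "distinct L'" for L' y
    using that by (induction L') (auto simp: F_def)
  ultimately have "mset (concat (map F L)) = mset xs"
    using \<open>distinct L\<close> by (intro multiset_eqI) (auto simp: not_in_iff)
  then have "smod_iso (dsum_list (map (case_prod III) xs)) (dsum_list (map (case_prod III) (concat (map F L))))"
    by (intro dsum_list_perm) auto
  also have "map (case_prod III) (concat (map F L)) = concat (map (\<lambda>l. map (\<lambda>k. III l (par l k)) [0..<c l]) L)"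
    by (simp add: map_concat block cong: map_cong)
  finally show ?thesis by blast
qed

theorem proposition2p3:
  fixes n :: nat
  assumes "n \<ge> 1"
  shows "(\<exists>p. smod_iso adjoint_mod (III 1 p)
              \<and> smod_iso (stensor_pow adjoint_mod n) (stensor_pow (III 1 p) n))
       \<and> (\<forall>p. \<exists>par :: int \<Rightarrow> nat \<Rightarrow> bool.
              smod_iso (stensor_pow (III 1 p) n)
                (dsum_list (concat (map (\<lambda>l. map (\<lambda>k. III l (par l k))
                      [0..<(2*n - 2) choose nat (int n - l)])
                   [2 - int n..int n]))))
       \<and> (\<exists>par :: int \<Rightarrow> nat \<Rightarrow> bool.
              smod_iso (stensor_pow adjoint_mod n)
                (dsum_list (concat (map (\<lambda>l. map (\<lambda>k. III l (par l k))
                      [0..<(2*n - 2) choose nat (int n - l)])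
                   [2 - int n..int n]))))"
proof -
  have adjoint_power: "smod_iso (stensor_pow adjoint_mod n) (stensor_pow (III 1 False) n)"
    by (simp add: stensor_pow_cong adjoint_mod_iso_III1)
  have decomposition: "\<exists>par. smod_iso (stensor_pow (III 1 p) n)
      (dsum_list (concat (map (\<lambda>l. map (\<lambda>k. III l (par l k))
         [0..<(2*n - 2) choose nat (int n - l)]) [2 - int n..int n])))" for p
  proof -
    obtain xs where "smod_iso (stensor_pow (III 1 p) n) (dsum_list (map (case_prod III) xs))"
      and "mset (map fst xs) = mset (III1_power_weights n)"
      using III1_power_decomposition[OF assms] by blast
    with dsum_list_III_regroup[of xs, OF _ distinct_upto] show ?thesis
      unfolding III1_power_weights_def by (meson smod_iso_trans smod_wf_dsum_list smod_wf_stensor_pow)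
  qed
  show ?thesis
    using adjoint_mod_iso_III1 adjoint_power decomposition
    by (meson smod_iso_trans smod_wf_dsum_list smod_wf_stensor_pow)
qed

end
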